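(* Let $M_1>0$, $M_2>0$. Let $F(z)=|z|^2G(z)+H(z)$, $z\in\mathbb{D}$, where $G,H$ are analytic in $\mathbb{D}$ with $G(0)=H(0)=0$, $G'(0)=H'(0)=1$, $|G(z)|\leq M_1$ and $|H(z)|\leq M_2$ for all $z\in\mathbb{D}$. Let $\rho_3$ be the unique root in $(0,1)$ of the equation $$1-\Big(M_2-\frac{1}{M_2}\Big)\frac{2r-r^2}{(1-r)^2}-\Big(M_1-\frac{1}{M_1}\Big)\frac{(3-2r)r^2}{(1-r)^2}-2r=0,$$ and $$\sigma_3=\rho_3-\rho_3^2-\Big(M_2-\frac{1}{M_2}\Big)\frac{\rho_3^2}{1-\rho_3}-\Big(M_1-\frac{1}{M_1}\Big)\frac{\rho_3^3}{1-\rho_3}.$$ Then $F$ is univalent in $\mathbb{D}_{\rho_3}$ and $F(\mathbb{D}_{\rho_3})\supseteq\mathbb{D}_{\sigma_3}$.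
   Context: $\mathbb{D}=\{z:|z|<1\}$ and $\mathbb{D}_r=\{z\in\mathbb{C}:|z|<r\}$. *)

theory Defs
  imports "HOL-Complex_Analysis.Complex_Analysis"
begin

definition rho3_eq :: "real \<Rightarrow> real \<Rightarrow> real \<Rightarrow> real" where
  "rho3_eq M1 M2 r = 1 - (M2 - 1 / M2) * ((2 * r - r ^ 2) / (1 - r) ^ 2)
      - (M1 - 1 / M1) * ((3 - 2 * r) * r ^ 2 / (1 - r) ^ 2) - 2 * r"

definition rho3 :: "real \<Rightarrow> real \<Rightarrow> real" where
  "rho3 M1 M2 = (THE r. 0 < r \<and> r < 1 \<and> rho3_eq M1 M2 r = 0)"

definition sigma3 :: "real \<Rightarrow> real \<Rightarrow> real" where
  "sigma3 M1 M2 = (let p = rho3 M1 M2 in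
      p - p ^ 2 - (M2 - 1 / M2) * (p ^ 2 / (1 - p)) - (M1 - 1 / M1) * (p ^ 3 / (1 - p)))"

end

theory Submission
  imports Defs
begin

(* Write G(z) = z q(z) (and likewise for H).  Then q(0) = 1 and |q| <= M, and the Schwarz-Pick
   lemma applied to q / M gives |q(z) - 1| <= (M - 1/M) |z| / (1 - |z|) together with a bound on
   |q'(z)|; this controls |G(z) - z|, |G'(z)| and, when M |z| <= 1, |G'(z) - 1| on every disc of
   radius r < 1.  For |z1|, |z2| <= r one gets
     |F(z2) - F(z1)| >= (1 - L_H - r^2 L_G - 2 r sup |G|) |z2 - z1|,
   where L_H and L_G are Lipschitz constants of H - id and G on the disc.  For r < rho3 this
   factor is at least the left-hand side of the equation defining rho3, hence positive, so F is
   injective.  By invariance of domain the image of the open disc is open, and since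
   |F| >= sigma3 on the circle |z| = rho3 it contains the disc of radius sigma3. *)

lemma Schwarz_Lemma_bounded:
  fixes f :: "complex \<Rightarrow> complex" and M :: real
  assumes holf: "f holomorphic_on ball 0 1" and f0: "f 0 = 0"
    and fM: "\<And>z. norm z < 1 \<Longrightarrow> norm (f z) \<le> M" and \<xi>: "norm \<xi> < 1"
  shows "norm (f \<xi>) \<le> M * norm \<xi>" and "norm (deriv f 0) \<le> M"
proof -
  have pos: "0 < M'" if "M < M'" for M'
    using fM[of 0] f0 that by simp
  have scaled: "norm (f \<xi>) / M' \<le> norm \<xi> \<and> norm (deriv f 0) / M' \<le> 1" if MM': "M < M'" for M'
  proof -
    have M'0: "0 < M'" using pos[OF MM'] .
    define g where "g w = f w / of_real M'" for w
    have holg: "g holomorphic_on ball 0 1"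
      unfolding g_def using holf by (intro holomorphic_intros) auto
    have g0: "g 0 = 0" by (simp add: g_def f0)
    have g1: "norm (g w) < 1" if "norm w < 1" for w
      using fM[OF that] MM' M'0 by (simp add: g_def norm_divide divide_less_eq)
    have "f field_differentiable at 0"
      using holf by (simp add: holomorphic_on_imp_differentiable_at)
    then have "deriv g 0 = deriv f 0 / of_real M'"
      unfolding g_def by (rule deriv_cdivide_right)
    then have "norm (deriv f 0) / M' \<le> 1"
      using Schwarz_Lemma(2)[OF holg g0 g1 \<xi>] M'0 by (simp add: norm_divide)
    moreover have "norm (f \<xi>) / M' \<le> norm \<xi>"
      using Schwarz_Lemma(1)[OF holg g0 g1 \<xi>] M'0 by (simp add: g_def norm_divide)
    ultimately show ?thesis by simp
  qed
  show "norm (deriv f 0) \<le> M"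
  proof (rule dense_ge)
    fix M' assume "M < M'"
    then show "norm (deriv f 0) \<le> M'"
      using scaled pos by (simp add: pos_divide_le_eq)
  qed
  show "norm (f \<xi>) \<le> M * norm \<xi>"
  proof (cases "\<xi> = 0")
    case True
    then show ?thesis using f0 by simp
  next
    case False
    have "norm (f \<xi>) / norm \<xi> \<le> M"
    proof (rule dense_ge)
      fix M' assume "M < M'"
      then show "norm (f \<xi>) / norm \<xi> \<le> M'"
        using scaled pos False by (simp add: pos_divide_le_eq mult.commute)
    qed
    then show ?thesis using False by (simp add: pos_divide_le_eq mult.commute)
  qed
qed

lemma Moebius_function_0_has_field_derivative:
  assumes "1 - cnj c * w \<noteq> 0"
  shows "(Moebius_function 0 c has_field_derivative (1 - c * cnj c) / (1 - cnj c * w)\<^sup>2) (at w)"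
proof -
  have "Moebius_function 0 c = (\<lambda>w. (w - c) / (1 - cnj c * w))"
    by (rule ext) (simp add: Moebius_function_simple)
  then show ?thesis
    using assms by (auto intro!: derivative_eq_intros simp: field_simps power2_eq_square)
qed

lemma Schwarz_Pick_real_value_at_0:
  fixes \<psi> :: "complex \<Rightarrow> complex" and a :: real
  assumes hol: "\<psi> holomorphic_on ball 0 1"
    and lt1: "\<And>z. norm z < 1 \<Longrightarrow> norm (\<psi> z) < 1"
    and \<psi>0: "\<psi> 0 = of_real a" and a0: "0 \<le> a" and a1: "a < 1"
    and z: "norm z < 1"
  shows "norm (\<psi> z - a) * (1 - a * norm z) \<le> (1 - a\<^sup>2) * norm z"
proof -
  define g where "g = Moebius_function 0 (of_real a) \<circ> \<psi>"
  have na: "norm (complex_of_real a) < 1" using a0 a1 by simp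
  have holg: "g holomorphic_on ball 0 1"
    unfolding g_def
    by (rule holomorphic_on_compose_gen[OF hol Moebius_function_holomorphic[OF na]])
       (use lt1 in auto)
  have g0: "g 0 = 0" by (simp add: g_def \<psi>0 Moebius_function_eq_zero)
  have g1: "norm (g w) < 1" if "norm w < 1" for w
    unfolding g_def o_def using Moebius_function_norm_lt_1[OF na lt1[OF that]] .
  have "a * norm (\<psi> z) \<le> norm (\<psi> z)"
    using a0 a1 by (simp add: mult_left_le_one_le)
  then have "norm (a * \<psi> z) < 1"
    using a0 lt1[OF z] by (simp add: norm_mult)
  then have nz: "1 - a * \<psi> z \<noteq> 0" by auto
  have "\<psi> z - a = g z * (1 - a * \<psi> z)"
    using nz by (simp add: g_def Moebius_function_simple)
  have triangle: "norm (1 - a * \<psi> z) \<le> (1 - a\<^sup>2) + a * norm (\<psi> z - a)"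
  proof -
    have "1 - a * \<psi> z = of_real (1 - a\<^sup>2) - a * (\<psi> z - a)"
      by (simp add: algebra_simps power2_eq_square)
    also have "norm \<dots> \<le> norm (complex_of_real (1 - a\<^sup>2)) + norm (a * (\<psi> z - a))"
      by (rule norm_triangle_ineq4)
    also have "\<dots> = (1 - a\<^sup>2) + a * norm (\<psi> z - a)"
      using a0 a1 power_le_one[of a 2] by (simp only: norm_mult norm_of_real) simp
    finally show ?thesis .
  qed
  have "norm (\<psi> z - a) \<le> norm z * norm (1 - a * \<psi> z)"
    using \<open>\<psi> z - a = g z * (1 - a * \<psi> z)\<close> Schwarz_Lemma(1)[OF holg g0 g1 z]
    by (simp add: norm_mult mult_right_mono)
  also have "\<dots> \<le> norm z * ((1 - a\<^sup>2) + a * norm (\<psi> z - a))"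
    using triangle by (simp add: mult_left_mono)
  finally show ?thesis by (simp add: algebra_simps)
qed

lemma Moebius_conjugate_self_map:
  fixes \<psi> :: "complex \<Rightarrow> complex"
  assumes hol: "\<psi> holomorphic_on ball 0 1"
    and lt1: "\<And>z. norm z < 1 \<Longrightarrow> norm (\<psi> z) < 1"
    and a: "norm a < 1" and b: "norm b < 1"
  shows "(Moebius_function 0 b \<circ> (\<psi> \<circ> Moebius_function 0 a)) holomorphic_on ball 0 1"
    and "\<And>w. norm w < 1 \<Longrightarrow> norm ((Moebius_function 0 b \<circ> (\<psi> \<circ> Moebius_function 0 a)) w) < 1"
proof -
  have into: "Moebius_function 0 a ` ball 0 1 \<subseteq> ball 0 1"
    using Moebius_function_norm_lt_1[OF a] by auto
  have "(\<psi> \<circ> Moebius_function 0 a) holomorphic_on ball 0 1"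
    by (rule holomorphic_on_compose_gen[OF Moebius_function_holomorphic[OF a] hol into])
  then show "(Moebius_function 0 b \<circ> (\<psi> \<circ> Moebius_function 0 a)) holomorphic_on ball 0 1"
    by (rule holomorphic_on_compose_gen)
       (use lt1 into in \<open>auto intro!: Moebius_function_holomorphic[OF b]\<close>)
  show "norm ((Moebius_function 0 b \<circ> (\<psi> \<circ> Moebius_function 0 a)) w) < 1" if "norm w < 1" for w
    using Moebius_function_norm_lt_1[OF b lt1[OF Moebius_function_norm_lt_1[OF a that]]] by simp
qed

lemma Schwarz_Pick_deriv:
  fixes \<psi> :: "complex \<Rightarrow> complex"
  assumes hol: "\<psi> holomorphic_on ball 0 1"
    and lt1: "\<And>z. norm z < 1 \<Longrightarrow> norm (\<psi> z) < 1"
    and z0: "norm z0 < 1"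
  shows "norm (deriv \<psi> z0) * (1 - (norm z0)\<^sup>2) \<le> 1 - (norm (\<psi> z0))\<^sup>2"
proof -
  define b where "b = \<psi> z0"
  have nb: "norm b < 1" using lt1[OF z0] by (simp add: b_def)
  have nz0: "norm (-z0) < 1" using z0 by simp
  define m1 where "m1 = Moebius_function 0 (-z0)"
  define m2 where "m2 = Moebius_function 0 b"
  define g where "g = m2 \<circ> (\<psi> \<circ> m1)"
  have holg: "g holomorphic_on ball 0 1" and g1: "\<And>w. norm w < 1 \<Longrightarrow> norm (g w) < 1"
    using Moebius_conjugate_self_map[of \<psi> "-z0" b] hol lt1 nz0 nb
    unfolding g_def m1_def m2_def by blast+
  have m1_0: "m1 0 = z0" by (simp add: m1_def Moebius_function_of_zero)
  have g0: "g 0 = 0" by (simp add: g_def m1_0 m2_def b_def Moebius_function_eq_zero)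
  have bb: "cnj b * b = of_real ((norm b)\<^sup>2)" "b * cnj b = of_real ((norm b)\<^sup>2)"
    by (simp_all only: complex_norm_square mult.commute[of "cnj b"])
  have zz: "z0 * cnj z0 = of_real ((norm z0)\<^sup>2)"
    by (simp only: complex_norm_square)
  have pb: "0 < 1 - (norm b)\<^sup>2" and pz: "0 < 1 - (norm z0)\<^sup>2"
    using nb z0 by (simp_all add: abs_square_less_1)
  then have nbb: "1 - cnj b * b \<noteq> 0"
    unfolding bb by (metis of_real_1 of_real_diff of_real_eq_0_iff less_irrefl)
  have dm1: "(m1 has_field_derivative (1 - z0 * cnj z0)) (at 0)"
    unfolding m1_def using Moebius_function_0_has_field_derivative[of "-z0" 0] by simp
  have d\<psi>: "(\<psi> has_field_derivative deriv \<psi> z0) (at (m1 0))"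
    unfolding m1_0 by (rule holomorphic_derivI[OF hol]) (use z0 in auto)
  have dm2: "(m2 has_field_derivative (1 - b * cnj b) / (1 - cnj b * b)\<^sup>2) (at ((\<psi> \<circ> m1) 0))"
    unfolding m2_def using Moebius_function_0_has_field_derivative[OF nbb] by (simp add: m1_0 b_def)
  have "deriv g 0 = (1 - b * cnj b) / (1 - cnj b * b)\<^sup>2 * (deriv \<psi> z0 * (1 - z0 * cnj z0))"
    unfolding g_def by (rule DERIV_imp_deriv[OF DERIV_chain[OF dm2 DERIV_chain[OF d\<psi> dm1]]])
  also have "\<dots> = deriv \<psi> z0 * of_real (1 - (norm z0)\<^sup>2) / of_real (1 - (norm b)\<^sup>2)"
    using nbb unfolding bb zz by (simp add: power2_eq_square)
  moreover have "norm (complex_of_real (1 - (norm z0)\<^sup>2)) = 1 - (norm z0)\<^sup>2"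
    "norm (complex_of_real (1 - (norm b)\<^sup>2)) = 1 - (norm b)\<^sup>2"
    using pb pz by (simp_all only: norm_of_real abs_of_pos)
  ultimately have "norm (deriv \<psi> z0) * (1 - (norm z0)\<^sup>2) / (1 - (norm b)\<^sup>2) \<le> 1"
    using Schwarz_Lemma(2)[OF holg g0 g1, of 0] by (simp only: norm_mult norm_divide) simp
  then show ?thesis
    using pb by (simp add: b_def pos_divide_le_eq)
qed

lemma diff_inverse_nonneg:
  fixes M :: real
  assumes "1 \<le> M"
  shows "0 \<le> M - 1 / M"
  using assms order_trans[of "1 / M" 1 M] by simp

lemma power_div_one_minus_power_mono:
  fixes c t r :: real
  assumes c: "0 \<le> c" and t: "0 \<le> t" "t \<le> r" and r: "r < 1" and k: "0 < k"
  shows "c * t ^ m / (1 - t ^ k) ^ n \<le> c * r ^ m / (1 - r ^ k) ^ n"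
proof (rule frac_le)
  have r0: "0 \<le> r" using t by linarith
  have "r ^ k < 1" using r0 r k by (simp add: power_less_one_iff)
  then show "0 < (1 - r ^ k) ^ n" by simp
  have "t ^ k \<le> r ^ k" using t by (intro power_mono)
  then show "(1 - r ^ k) ^ n \<le> (1 - t ^ k) ^ n"
    using \<open>r ^ k < 1\<close> by (intro power_mono) auto
  show "0 \<le> c * r ^ m" using c r0 by simp
  show "c * t ^ m \<le> c * r ^ m" using c t by (intro mult_left_mono power_mono) auto
qed

lemma M_minus_square_div_le:
  fixes M r s :: real
  assumes M: "1 \<le> M" and r0: "0 \<le> r" and r1: "r < 1" and Mr: "M * r \<le> 1"
    and s: "(1 - M * r) / (1 - r / M) \<le> s"
  shows "M - s\<^sup>2 / M \<le> (M - 1 / M) * (1 - r\<^sup>2) / (1 - r)\<^sup>2"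
proof -
  define t where "t = 1 - r / M"
  have Mp: "0 < M" using M by simp
  have "r / M \<le> r" using M r0 by (simp add: divide_le_eq mult_le_cancel_left1)
  then have t1: "1 - r \<le> t" by (simp add: t_def)
  then have t0: "0 < t" using r1 by simp
  have "0 \<le> (1 - M * r) / t" using Mr t0 by simp
  then have "((1 - M * r) / t)\<^sup>2 \<le> s\<^sup>2" using s by (simp add: power_mono t_def)
  then have "M - s\<^sup>2 / M \<le> M - ((1 - M * r) / t)\<^sup>2 / M"
    using Mp by (simp add: divide_right_mono)
  also have "\<dots> = ((M * t)\<^sup>2 - (1 - M * r)\<^sup>2) / (M * t\<^sup>2)"
    using t0 Mp by (simp add: field_simps power2_eq_square)
  also have "(M * t)\<^sup>2 - (1 - M * r)\<^sup>2 = (M\<^sup>2 - 1) * (1 - r\<^sup>2)"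
    using Mp by (simp add: t_def field_simps power2_eq_square)
  also have "(M\<^sup>2 - 1) * (1 - r\<^sup>2) / (M * t\<^sup>2) = (M - 1 / M) * (1 - r\<^sup>2) / t\<^sup>2"
    using t0 Mp by (simp add: field_simps power2_eq_square)
  also have "\<dots> \<le> (M - 1 / M) * (1 - r\<^sup>2) / (1 - r)\<^sup>2"
  proof (rule divide_left_mono)
    show "0 \<le> (M - 1 / M) * (1 - r\<^sup>2)"
      using diff_inverse_nonneg[OF M] r0 r1 by (simp add: abs_square_le_1)
    show "(1 - r)\<^sup>2 \<le> t\<^sup>2" using t1 r1 by (simp add: power_mono)
    show "0 < t\<^sup>2 * (1 - r)\<^sup>2" using t0 r1 by simp
  qed
  finally show ?thesis .
qed

locale normalized_bounded_holomorphic =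
  fixes f :: "complex \<Rightarrow> complex" and M :: real
  assumes holomorphic: "f holomorphic_on ball 0 1"
    and at_0: "f 0 = 0" and deriv_at_0: "deriv f 0 = 1"
    and bounded: "\<And>z. z \<in> ball 0 1 \<Longrightarrow> norm (f z) \<le> M"
begin

definition quot :: "complex \<Rightarrow> complex" where
  "quot z = (if z = 0 then 1 else f z / z)"

lemma f_eq_mult_quot: "f z = z * quot z"
  by (simp add: quot_def at_0)

lemma quot_0 [simp]: "quot 0 = 1"
  by (simp add: quot_def)

lemma holomorphic_quot: "quot holomorphic_on ball 0 1"
  by (rule pole_theorem_open_0[OF holomorphic open_ball, of 0])
     (auto simp: quot_def deriv_at_0 at_0)

lemma norm_quot_le:
  assumes "norm z < 1"
  shows "norm (quot z) \<le> M"
proof (cases "z = 0")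
  case True
  then show ?thesis
    using Schwarz_Lemma_bounded(2)[OF holomorphic at_0 _ assms] bounded by (simp add: deriv_at_0)
next
  case False
  have "norm z * norm (quot z) \<le> norm z * M"
    using Schwarz_Lemma_bounded(1)[OF holomorphic at_0 _ assms] bounded
    by (simp add: f_eq_mult_quot norm_mult mult.commute)
  then show ?thesis using False by simp
qed

lemma one_le_M: "1 \<le> M"
  using norm_quot_le[of 0] by simp

lemma M_pos: "0 < M"
  using one_le_M by simp

lemma norm_quot_lt_M_or_const:
  obtains "\<And>z. norm z < 1 \<Longrightarrow> norm (quot z) < M"
    | "M = 1" and "\<And>z. norm z < 1 \<Longrightarrow> quot z = 1"
proof (cases "\<exists>z0. norm z0 < 1 \<and> norm (quot z0) = M")
  case True
  then obtain z0 where z0: "norm z0 < 1" "norm (quot z0) = M" by blast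
  have "quot constant_on ball 0 1"
    by (rule maximum_modulus_principle[OF holomorphic_quot open_ball connected_ball open_ball
          subset_refl, of z0])
       (use z0 norm_quot_le in auto)
  then obtain c where c: "\<And>w. w \<in> ball 0 1 \<Longrightarrow> quot w = c"
    by (auto simp: constant_on_def)
  have "c = 1" using c[of 0] by simp
  show ?thesis
  proof (rule that(2))
    show "M = 1" using z0 c[of z0] \<open>c = 1\<close> by simp
    show "quot z = 1" if "norm z < 1" for z using c[of z] \<open>c = 1\<close> that by simp
  qed
next
  case False
  have "norm (quot z) < M" if "norm z < 1" for z
  proof -
    have "norm (quot z) \<noteq> M" using False that by blast
    then show ?thesis using norm_quot_le[OF that] by linarith
  qed
  then show ?thesis by (rule that(1))
qed

lemma scaled_quot_self_map:
  assumes "\<And>z. norm z < 1 \<Longrightarrow> norm (quot z) < M"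
  shows "(\<lambda>z. quot z / of_real M) holomorphic_on ball 0 1"
    and "\<And>z. norm z < 1 \<Longrightarrow> norm (quot z / of_real M) < 1"
  using holomorphic_quot assms one_le_M
  by (auto intro!: holomorphic_intros simp: norm_divide divide_less_eq)

lemma norm_quot_sub_1_Pick:
  assumes z: "norm z < 1"
  shows "norm (quot z - 1) * (1 - norm z / M) \<le> (M - 1 / M) * norm z"
proof (cases rule: norm_quot_lt_M_or_const)
  case 1
  have "1 / M < 1" using scaled_quot_self_map(2)[OF 1, of 0] M_pos by (simp add: norm_divide)
  then have "norm (quot z / of_real M - of_real (1 / M)) * (1 - 1 / M * norm z)
      \<le> (1 - (1 / M)\<^sup>2) * norm z"
    using Schwarz_Pick_real_value_at_0[OF scaled_quot_self_map[OF 1], of "1 / M"] z M_pos by simp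
  moreover have "quot z / of_real M - of_real (1 / M) = (quot z - 1) / of_real M"
    using M_pos by (simp add: field_simps)
  ultimately have "norm (quot z - 1) * (1 - norm z / M) / M \<le> (1 - (1 / M)\<^sup>2) * norm z"
    using M_pos by (simp add: norm_divide)
  then have "norm (quot z - 1) * (1 - norm z / M) \<le> M * ((1 - (1 / M)\<^sup>2) * norm z)"
    using M_pos by (simp add: pos_divide_le_eq mult.commute)
  also have "\<dots> = (M - 1 / M) * norm z"
    using M_pos by (simp add: field_simps power2_eq_square)
  finally show ?thesis .
next
  case 2
  then show ?thesis using z by simp
qed

lemma norm_deriv_quot_Pick:
  assumes z: "norm z < 1"
  shows "norm (deriv quot z) * (1 - (norm z)\<^sup>2) \<le> M - (norm (quot z))\<^sup>2 / M"
proof (cases rule: norm_quot_lt_M_or_const)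
  case 1
  have "quot field_differentiable at z"
    using holomorphic_quot z by (simp add: holomorphic_on_imp_differentiable_at)
  then have "deriv (\<lambda>w. quot w / of_real M) z = deriv quot z / of_real M"
    by (rule deriv_cdivide_right)
  then have "norm (deriv quot z) * (1 - (norm z)\<^sup>2) / M \<le> 1 - (norm (quot z) / M)\<^sup>2"
    using Schwarz_Pick_deriv[OF scaled_quot_self_map[OF 1] z] M_pos by (simp add: norm_divide)
  then have "norm (deriv quot z) * (1 - (norm z)\<^sup>2) \<le> M * (1 - (norm (quot z) / M)\<^sup>2)"
    using M_pos by (simp add: pos_divide_le_eq mult.commute)
  also have "\<dots> = M - (norm (quot z))\<^sup>2 / M"
    using M_pos by (simp add: field_simps power2_eq_square)
  finally show ?thesis .
next
  case 2
  have "((\<lambda>w. 1) has_field_derivative 0) (at z)" by simp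
  then have "(quot has_field_derivative 0) (at z)"
    by (rule has_field_derivative_transform_within_open[where S="ball 0 1"])
       (use z 2 in auto)
  then show ?thesis using 2 z by (simp add: DERIV_imp_deriv)
qed

lemma norm_quot_sub_1_le:
  assumes z: "norm z \<le> r" and r: "r < 1"
  shows "norm (quot z - 1) \<le> (M - 1 / M) * r / (1 - r)"
proof -
  have z1: "norm z < 1" using z r by linarith
  have "norm z \<le> M * norm z"
    using one_le_M mult_right_mono[of 1 M "norm z"] by simp
  then have "1 - norm z \<le> 1 - norm z / M"
    using M_pos by (simp add: pos_divide_le_eq mult.commute)
  then have "norm (quot z - 1) * (1 - norm z) \<le> norm (quot z - 1) * (1 - norm z / M)"
    by (simp add: mult_left_mono)
  also have "\<dots> \<le> (M - 1 / M) * norm z"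
    by (rule norm_quot_sub_1_Pick[OF z1])
  finally have "norm (quot z - 1) \<le> (M - 1 / M) * norm z / (1 - norm z)"
    using z1 by (simp add: pos_le_divide_eq)
  also have "\<dots> \<le> (M - 1 / M) * r / (1 - r)"
    using power_div_one_minus_power_mono[of "M - 1 / M" "norm z" r 1 1 1]
      diff_inverse_nonneg[OF one_le_M] z r by simp
  finally show ?thesis .
qed

lemma norm_sub_id_le:
  assumes z: "norm z \<le> r" and r: "r < 1"
  shows "norm (f z - z) \<le> (M - 1 / M) * r\<^sup>2 / (1 - r)"
proof -
  have "norm (f z - z) = norm z * norm (quot z - 1)"
    by (simp add: f_eq_mult_quot flip: norm_mult) (simp add: algebra_simps)
  also have "\<dots> \<le> r * ((M - 1 / M) * r / (1 - r))"
    using z norm_ge_zero[of z] norm_quot_sub_1_le[OF z r] by (intro mult_mono) (linarith | simp)+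
  also have "\<dots> = (M - 1 / M) * r\<^sup>2 / (1 - r)"
    by (simp add: power2_eq_square)
  finally show ?thesis .
qed

lemma deriv_eq_quot:
  assumes z: "norm z < 1"
  shows "deriv f z = quot z + z * deriv quot z"
proof -
  have "(quot has_field_derivative deriv quot z) (at z)"
    by (rule holomorphic_derivI[OF holomorphic_quot]) (use z in auto)
  then have "((\<lambda>w. w * quot w) has_field_derivative quot z + z * deriv quot z) (at z)"
    by (auto intro!: derivative_eq_intros)
  moreover have "f = (\<lambda>w. w * quot w)"
    using f_eq_mult_quot by auto
  ultimately show ?thesis by (simp add: DERIV_imp_deriv)
qed

lemma norm_deriv_le:
  assumes z: "norm z \<le> r" and r: "r < 1"
  shows "norm (deriv f z) \<le> 1 + (M - 1 / M) * r / (1 - r) + r * M / (1 - r\<^sup>2)"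
proof -
  have z1: "norm z < 1" using z r by linarith
  have pos: "0 < 1 - (norm z)\<^sup>2" using z1 by (simp add: abs_square_less_1)
  have "0 \<le> (norm (quot z))\<^sup>2 / M" using M_pos by simp
  then have "norm (deriv quot z) * (1 - (norm z)\<^sup>2) \<le> M"
    using norm_deriv_quot_Pick[OF z1] by linarith
  then have "norm (deriv quot z) \<le> M / (1 - (norm z)\<^sup>2)"
    using pos by (simp add: pos_le_divide_eq)
  then have "norm z * norm (deriv quot z) \<le> norm z * (M / (1 - (norm z)\<^sup>2))"
    by (rule mult_left_mono) simp
  also have "\<dots> = M * norm z / (1 - (norm z)\<^sup>2)"
    by simp
  also have "\<dots> \<le> r * M / (1 - r\<^sup>2)"
    using power_div_one_minus_power_mono[of M "norm z" r 2 1 1] M_pos z r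
    by (simp add: mult.commute)
  finally have dq: "norm z * norm (deriv quot z) \<le> r * M / (1 - r\<^sup>2)" .
  have "norm (quot z) \<le> 1 + norm (quot z - 1)"
    using norm_triangle_ineq2[of "quot z" 1] by simp
  then have q: "norm (quot z) \<le> 1 + (M - 1 / M) * r / (1 - r)"
    using norm_quot_sub_1_le[OF z r] by linarith
  have "norm (deriv f z) \<le> norm (quot z) + norm z * norm (deriv quot z)"
    unfolding deriv_eq_quot[OF z1] using norm_triangle_ineq[of "quot z" "z * deriv quot z"]
    by (simp add: norm_mult)
  with q dq show ?thesis by linarith
qed

lemma norm_deriv_sub_1_le:
  assumes z: "norm z \<le> r" and r: "r < 1" and Mr: "M * r \<le> 1"
  shows "norm (deriv f z - 1) \<le> (M - 1 / M) * r / (1 - r) + r * (M - 1 / M) / (1 - r)\<^sup>2"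
proof -
  have z1: "norm z < 1" using z r by linarith
  have Mz: "M * norm z \<le> 1"
    using Mr z M_pos by (meson mult_left_mono order_trans less_imp_le)
  define t where "t = 1 - norm z / M"
  have "norm z / M < 1" using z1 one_le_M M_pos by (simp add: divide_less_eq)
  then have t0: "0 < t" by (simp add: t_def)
  have "norm (quot z - 1) \<le> (M - 1 / M) * norm z / t"
    using norm_quot_sub_1_Pick[OF z1] t0 by (simp add: t_def pos_le_divide_eq)
  moreover have "1 - (M - 1 / M) * norm z / t = (1 - M * norm z) / t"
    using t0 M_pos by (simp add: t_def field_simps)
  moreover have "1 \<le> norm (quot z) + norm (quot z - 1)"
    using norm_triangle_ineq2[of 1 "quot z"] by (simp add: norm_minus_commute)
  ultimately have "(1 - M * norm z) / (1 - norm z / M) \<le> norm (quot z)"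
    unfolding t_def by linarith
  then have "M - (norm (quot z))\<^sup>2 / M \<le> (M - 1 / M) * (1 - (norm z)\<^sup>2) / (1 - norm z)\<^sup>2"
    by (rule M_minus_square_div_le[OF one_le_M norm_ge_zero z1 Mz])
  also have "\<dots> = (M - 1 / M) / (1 - norm z)\<^sup>2 * (1 - (norm z)\<^sup>2)"
    by simp
  finally have "norm (deriv quot z) * (1 - (norm z)\<^sup>2)
      \<le> (M - 1 / M) / (1 - norm z)\<^sup>2 * (1 - (norm z)\<^sup>2)"
    using norm_deriv_quot_Pick[OF z1] by linarith
  moreover have "0 < 1 - (norm z)\<^sup>2" using z1 by (simp add: abs_square_less_1)
  ultimately have "norm (deriv quot z) \<le> (M - 1 / M) / (1 - norm z)\<^sup>2"
    by (rule mult_right_le_imp_le)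
  then have "norm z * norm (deriv quot z) \<le> norm z * ((M - 1 / M) / (1 - norm z)\<^sup>2)"
    by (rule mult_left_mono) simp
  also have "\<dots> = (M - 1 / M) * norm z / (1 - norm z)\<^sup>2"
    by simp
  also have "\<dots> \<le> r * (M - 1 / M) / (1 - r)\<^sup>2"
    using power_div_one_minus_power_mono[of "M - 1 / M" "norm z" r 1 1 2]
      diff_inverse_nonneg[OF one_le_M] z r by (simp add: mult.commute)
  finally have dq: "norm z * norm (deriv quot z) \<le> r * (M - 1 / M) / (1 - r)\<^sup>2" .
  have "norm (deriv f z - 1) \<le> norm (quot z - 1) + norm z * norm (deriv quot z)"
    unfolding deriv_eq_quot[OF z1] using norm_triangle_ineq[of "quot z - 1" "z * deriv quot z"]
    by (simp add: norm_mult algebra_simps)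
  with norm_quot_sub_1_le[OF z r] dq show ?thesis by linarith
qed

lemma norm_diff_le_on_cball:
  assumes r: "r < 1" and w: "norm w1 \<le> r" "norm w2 \<le> r"
  shows "norm (f w2 - f w1) \<le> (1 + (M - 1 / M) * r / (1 - r) + r * M / (1 - r\<^sup>2)) * norm (w2 - w1)"
proof (rule field_differentiable_bound[OF convex_cball])
  fix w :: complex assume "w \<in> cball 0 r"
  then show "(f has_field_derivative deriv f w) (at w within cball 0 r)"
    "norm (deriv f w) \<le> 1 + (M - 1 / M) * r / (1 - r) + r * M / (1 - r\<^sup>2)"
    using r by (auto intro!: holomorphic_derivI[OF holomorphic] norm_deriv_le)
qed (use w in auto)

lemma norm_diff_sub_id_le_on_cball:
  assumes r: "r < 1" and Mr: "M * r \<le> 1" and w: "norm w1 \<le> r" "norm w2 \<le> r"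
  shows "norm ((f w2 - w2) - (f w1 - w1))
    \<le> ((M - 1 / M) * r / (1 - r) + r * (M - 1 / M) / (1 - r)\<^sup>2) * norm (w2 - w1)"
proof (rule field_differentiable_bound[OF convex_cball])
  fix w :: complex assume "w \<in> cball 0 r"
  then show "((\<lambda>w. f w - w) has_field_derivative deriv f w - 1) (at w within cball 0 r)"
    "norm (deriv f w - 1) \<le> (M - 1 / M) * r / (1 - r) + r * (M - 1 / M) / (1 - r)\<^sup>2"
    using r Mr by (auto intro!: derivative_eq_intros holomorphic_derivI[OF holomorphic]
        norm_deriv_sub_1_le)
qed (use w in auto)

lemma norm_le:
  assumes z: "norm z \<le> r" and r: "r < 1"
  shows "norm (f z) \<le> r + (M - 1 / M) * r\<^sup>2 / (1 - r)"
  using norm_triangle_ineq[of z "f z - z"] norm_sub_id_le[OF z r] z by simp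

lemma continuous_on_cball:
  assumes "r < 1"
  shows "continuous_on (cball 0 r) f"
  by (rule continuous_on_subset[OF holomorphic_on_imp_continuous_on[OF holomorphic]])
     (use assms in auto)

end

lemma rho3_eq_terms_mono:
  fixes x y :: real
  assumes x0: "0 \<le> x" and xy: "x \<le> y" and y1: "y < 1"
  shows "(2 * x - x\<^sup>2) / (1 - x)\<^sup>2 \<le> (2 * y - y\<^sup>2) / (1 - y)\<^sup>2"
    and "(3 - 2 * x) * x\<^sup>2 / (1 - x)\<^sup>2 \<le> (3 - 2 * y) * y\<^sup>2 / (1 - y)\<^sup>2"
proof -
  have p: "0 < (1 - y)\<^sup>2" using y1 by simp
  have q: "(1 - y)\<^sup>2 \<le> (1 - x)\<^sup>2" using x0 xy y1 by (intro power_mono) auto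
  have e: "(2 * t - t\<^sup>2) / (1 - t)\<^sup>2 = 1 / (1 - t)\<^sup>2 - 1" if "t < 1" for t :: real
  proof -
    have "(1 - t)\<^sup>2 \<noteq> 0" using that by simp
    then have "1 / (1 - t)\<^sup>2 - 1 = (1 - (1 - t)\<^sup>2) / (1 - t)\<^sup>2"
      by (simp add: diff_divide_distrib)
    also have "1 - (1 - t)\<^sup>2 = 2 * t - t\<^sup>2"
      by (simp add: power2_eq_square algebra_simps)
    finally show ?thesis by simp
  qed
  have "1 / (1 - x)\<^sup>2 \<le> 1 / (1 - y)\<^sup>2" using frac_le[of 1 1 "(1 - y)\<^sup>2" "(1 - x)\<^sup>2"] p q by simp
  then show "(2 * x - x\<^sup>2) / (1 - x)\<^sup>2 \<le> (2 * y - y\<^sup>2) / (1 - y)\<^sup>2"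
    using e[of x] e[of y] xy y1 by simp
  have "x\<^sup>2 \<le> x" "y\<^sup>2 \<le> y" "x * y \<le> x" "x * y \<le> y"
    using x0 xy y1 by (simp_all add: power2_eq_square mult_left_le_one_le mult_left_le)
  then have "0 \<le> (y - x) * (3 * (x + y) - 2 * (x\<^sup>2 + x * y + y\<^sup>2))"
    using xy by (intro mult_nonneg_nonneg) auto
  also have "\<dots> = (3 - 2 * y) * y\<^sup>2 - (3 - 2 * x) * x\<^sup>2"
    by (simp add: algebra_simps power2_eq_square)
  finally have n: "(3 - 2 * x) * x\<^sup>2 \<le> (3 - 2 * y) * y\<^sup>2" by simp
  have "0 \<le> (3 - 2 * y) * y\<^sup>2" using y1 by simp
  then show "(3 - 2 * x) * x\<^sup>2 / (1 - x)\<^sup>2 \<le> (3 - 2 * y) * y\<^sup>2 / (1 - y)\<^sup>2"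
    using n p q by (rule frac_le)
qed

lemma rho3_eq_strict_antimono:
  fixes M1 M2 x y :: real
  assumes M1: "1 \<le> M1" and M2: "1 \<le> M2" and x0: "0 \<le> x" and xy: "x < y" and y1: "y < 1"
  shows "rho3_eq M1 M2 y < rho3_eq M1 M2 x"
proof -
  note mono = rho3_eq_terms_mono[OF x0 less_imp_le[OF xy] y1]
  have "(M2 - 1 / M2) * ((2 * x - x\<^sup>2) / (1 - x)\<^sup>2) \<le> (M2 - 1 / M2) * ((2 * y - y\<^sup>2) / (1 - y)\<^sup>2)"
    using mono(1) diff_inverse_nonneg[OF M2] by (rule mult_left_mono)
  moreover have "(M1 - 1 / M1) * ((3 - 2 * x) * x\<^sup>2 / (1 - x)\<^sup>2)
      \<le> (M1 - 1 / M1) * ((3 - 2 * y) * y\<^sup>2 / (1 - y)\<^sup>2)"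
    using mono(2) diff_inverse_nonneg[OF M1] by (rule mult_left_mono)
  ultimately show ?thesis using xy unfolding rho3_eq_def by linarith
qed

lemma rho3_root:
  fixes M1 M2 :: real
  assumes M1: "1 \<le> M1" and M2: "1 \<le> M2"
  shows "0 < rho3 M1 M2 \<and> rho3 M1 M2 \<le> 1 / 2 \<and> rho3_eq M1 M2 (rho3 M1 M2) = 0"
proof -
  have cont: "continuous_on {0..1/2} (rho3_eq M1 M2)"
    unfolding rho3_eq_def by (intro continuous_intros) auto
  have at_0: "rho3_eq M1 M2 0 = 1" by (simp add: rho3_eq_def)
  have "(2 * (1 / 2) - (1 / 2)\<^sup>2) / (1 - 1 / 2)\<^sup>2 = (3::real)"
    "(3 - 2 * (1 / 2)) * (1 / 2)\<^sup>2 / (1 - 1 / 2)\<^sup>2 = (2::real)"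
    by (simp_all add: power2_eq_square)
  then have at_half: "rho3_eq M1 M2 (1 / 2) \<le> 0"
    unfolding rho3_eq_def using diff_inverse_nonneg[OF M1] diff_inverse_nonneg[OF M2] by simp
  obtain x where x: "0 \<le> x" "x \<le> 1 / 2" "rho3_eq M1 M2 x = 0"
    using IVT2'[of "rho3_eq M1 M2" "1 / 2" 0 0, OF at_half] at_0 cont by auto
  have "0 < x" using x at_0 by (cases "x = 0") auto
  have unique: "y = x" if y: "0 < y" "y < 1" "rho3_eq M1 M2 y = 0" for y
  proof (rule ccontr)
    assume "y \<noteq> x"
    then consider "y < x" | "x < y" by linarith
    then show False
    proof cases
      case 1
      then show False using rho3_eq_strict_antimono[OF M1 M2 _ 1] y x by simp
    next
      case 2
      then show False using rho3_eq_strict_antimono[OF M1 M2 _ 2] y x by simp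
    qed
  qed
  have "rho3 M1 M2 = x"
    unfolding rho3_def
  proof (rule the_equality)
    show "0 < x \<and> x < 1 \<and> rho3_eq M1 M2 x = 0" using x \<open>0 < x\<close> by simp
  qed (use unique in blast)
  then show ?thesis using x \<open>0 < x\<close> by simp
qed

lemma rho3_eq_pos_below_rho3:
  fixes M1 M2 r :: real
  assumes M1: "1 \<le> M1" and M2: "1 \<le> M2" and r: "0 \<le> r" "r < rho3 M1 M2"
  shows "0 < rho3_eq M1 M2 r"
  using rho3_eq_strict_antimono[OF M1 M2 r] rho3_root[OF M1 M2] by simp

lemma sub_id_lipschitz_constant_eq:
  fixes A r :: real
  assumes "r < 1"
  shows "A * r / (1 - r) + r * A / (1 - r)\<^sup>2 = A * ((2 * r - r\<^sup>2) / (1 - r)\<^sup>2)"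
proof -
  have "A * r / (1 - r) = A * (r * (1 - r)) / (1 - r)\<^sup>2"
    using assms by (simp add: power2_eq_square)
  then have "A * r / (1 - r) + r * A / (1 - r)\<^sup>2 = (A * (r * (1 - r)) + r * A) / (1 - r)\<^sup>2"
    by (simp add: add_divide_distrib)
  also have "A * (r * (1 - r)) + r * A = A * (2 * r - r\<^sup>2)"
    by (simp add: algebra_simps power2_eq_square)
  finally show ?thesis by simp
qed

lemma biharmonic_G_terms_le:
  fixes M r :: real
  assumes M: "1 \<le> M" and r0: "0 \<le> r" and rh: "r \<le> 1 / 2"
  shows "r\<^sup>2 * (1 + (M - 1 / M) * r / (1 - r) + r * M / (1 - r\<^sup>2))
      + 2 * r * (r + (M - 1 / M) * r\<^sup>2 / (1 - r))
    \<le> 2 * r + (M - 1 / M) * ((3 - 2 * r) * r\<^sup>2 / (1 - r)\<^sup>2)"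
proof -
  define b where "b = M - 1 / M"
  have r1: "r < 1" using rh by simp
  have d2: "0 < (1 - r)\<^sup>2" using r1 by simp
  have d3: "3 / 4 \<le> 1 - r\<^sup>2"
    using r0 rh power_mono[OF rh r0, of 2] by (simp add: power2_eq_square)
  have "r * M / (1 - r\<^sup>2) \<le> r * (b + 1) / (1 - r\<^sup>2)"
    using M r0 d3 unfolding b_def by (intro divide_right_mono mult_left_mono) (auto simp: field_simps)
  then have "r\<^sup>2 * (1 + b * r / (1 - r) + r * M / (1 - r\<^sup>2)) + 2 * r * (r + b * r\<^sup>2 / (1 - r))
      \<le> r\<^sup>2 * (1 + b * r / (1 - r) + r * (b + 1) / (1 - r\<^sup>2)) + 2 * r * (r + b * r\<^sup>2 / (1 - r))"
    by (simp add: mult_left_mono)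
  also have "\<dots> = (3 * r\<^sup>2 + r ^ 3 / (1 - r\<^sup>2)) + b * (3 * (r ^ 3 / (1 - r)) + r ^ 3 / (1 - r\<^sup>2))"
    by (simp add: field_simps power2_eq_square power3_eq_cube add_divide_distrib)
  finally have split: "r\<^sup>2 * (1 + b * r / (1 - r) + r * M / (1 - r\<^sup>2)) + 2 * r * (r + b * r\<^sup>2 / (1 - r))
      \<le> (3 * r\<^sup>2 + r ^ 3 / (1 - r\<^sup>2)) + b * (3 * (r ^ 3 / (1 - r)) + r ^ 3 / (1 - r\<^sup>2))" .
  have "r ^ 3 / (1 - r\<^sup>2) \<le> 4 / 3 * r ^ 3"
    using frac_le[of "r ^ 3" "r ^ 3" "3 / 4" "1 - r\<^sup>2"] r0 d3 by simp
  moreover have "r * (3 * r + 4 / 3 * r\<^sup>2) \<le> r * 2"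
    using r0 rh power_mono[OF rh r0, of 2] by (intro mult_left_mono) (auto simp: power2_eq_square)
  then have "3 * r\<^sup>2 + 4 / 3 * r ^ 3 \<le> 2 * r"
    by (simp add: power2_eq_square power3_eq_cube algebra_simps)
  ultimately have free: "3 * r\<^sup>2 + r ^ 3 / (1 - r\<^sup>2) \<le> 2 * r"
    by linarith
  have "r ^ 3 / (1 - r) \<le> r ^ 3 / (1 - r)\<^sup>2"
    using r0 r1 d2 by (intro frac_le) (auto simp: power2_eq_square mult_left_le_one_le)
  moreover have "r ^ 3 / (1 - r\<^sup>2) \<le> r ^ 3 / (1 - r)\<^sup>2"
    using r0 r1 d2 by (intro frac_le) (auto simp: power2_eq_square algebra_simps mult_left_le)
  moreover have "4 * r ^ 3 / (1 - r)\<^sup>2 \<le> (3 - 2 * r) * r\<^sup>2 / (1 - r)\<^sup>2"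
  proof (rule divide_right_mono)
    have "r\<^sup>2 * (4 * r) \<le> r\<^sup>2 * (3 - 2 * r)"
      using rh by (intro mult_left_mono) auto
    then show "4 * r ^ 3 \<le> (3 - 2 * r) * r\<^sup>2"
      by (simp add: power2_eq_square power3_eq_cube algebra_simps)
  qed simp
  ultimately have "3 * (r ^ 3 / (1 - r)) + r ^ 3 / (1 - r\<^sup>2) \<le> (3 - 2 * r) * r\<^sup>2 / (1 - r)\<^sup>2"
    by simp
  then have "b * (3 * (r ^ 3 / (1 - r)) + r ^ 3 / (1 - r\<^sup>2)) \<le> b * ((3 - 2 * r) * r\<^sup>2 / (1 - r)\<^sup>2)"
    using diff_inverse_nonneg[OF M] unfolding b_def by (intro mult_left_mono) auto
  with split free show ?thesis
    unfolding b_def by linarith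
qed

lemma injectivity_margin_pos:
  fixes M1 M2 r :: real
  assumes M1: "1 \<le> M1" and M2: "1 \<le> M2" and r0: "0 \<le> r" and rh: "r \<le> 1 / 2"
    and pos: "0 < rho3_eq M1 M2 r"
  shows "0 < 1 - ((M2 - 1 / M2) * r / (1 - r) + r * (M2 - 1 / M2) / (1 - r)\<^sup>2)
      - r\<^sup>2 * (1 + (M1 - 1 / M1) * r / (1 - r) + r * M1 / (1 - r\<^sup>2))
      - 2 * r * (r + (M1 - 1 / M1) * r\<^sup>2 / (1 - r))"
  using pos sub_id_lipschitz_constant_eq[of r "M2 - 1 / M2"] biharmonic_G_terms_le[OF M1 r0 rh] rh
  unfolding rho3_eq_def by linarith

lemma mult_le_1_of_rho3_eq_pos:
  fixes M1 M2 r :: real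
  assumes M1: "1 \<le> M1" and M2: "1 \<le> M2" and r0: "0 \<le> r" and rh: "r \<le> 1 / 2"
    and pos: "0 < rho3_eq M1 M2 r"
  shows "M2 * r \<le> 1"
proof -
  have r1: "r < 1" using rh by simp
  have "r\<^sup>2 * (2 * r) \<le> r\<^sup>2 * 3" using rh by (intro mult_left_mono) auto
  then have "2 * r * (1 - r)\<^sup>2 \<le> 2 * r - r\<^sup>2"
    by (simp add: power2_eq_square algebra_simps)
  then have "2 * r \<le> (2 * r - r\<^sup>2) / (1 - r)\<^sup>2"
    using r1 by (simp add: pos_le_divide_eq)
  then have "(M2 - 1 / M2) * (2 * r) \<le> (M2 - 1 / M2) * ((2 * r - r\<^sup>2) / (1 - r)\<^sup>2)"
    using diff_inverse_nonneg[OF M2] by (rule mult_left_mono)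
  moreover have "0 \<le> (M1 - 1 / M1) * ((3 - 2 * r) * r\<^sup>2 / (1 - r)\<^sup>2)"
    using diff_inverse_nonneg[OF M1] rh by simp
  ultimately have "(M2 - 1 / M2) * (2 * r) + 2 * r < 1"
    using pos unfolding rho3_eq_def by linarith
  moreover have "M2 * r \<le> (M2 - 1 / M2) * (2 * r) + 2 * r"
  proof -
    have "r / M2 \<le> r" using M2 r0 by (simp add: divide_le_eq mult_le_cancel_left1)
    then have "M2 * r \<le> 2 * (M2 * r) - 2 * (r / M2) + 2 * r" using M2 r0 by simp
    then show ?thesis by (simp add: algebra_simps)
  qed
  ultimately show ?thesis by linarith
qed

lemma sigma3_le:
  fixes M1 M2 :: real
  assumes M1: "1 \<le> M1" and M2: "1 \<le> M2"
  defines "\<rho> \<equiv> rho3 M1 M2"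
  shows "sigma3 M1 M2
    \<le> \<rho> - (M2 - 1 / M2) * \<rho>\<^sup>2 / (1 - \<rho>) - \<rho>\<^sup>2 * (\<rho> + (M1 - 1 / M1) * \<rho>\<^sup>2 / (1 - \<rho>))"
proof -
  have \<rho>0: "0 \<le> \<rho>" and \<rho>1: "\<rho> < 1"
    using rho3_root[OF M1 M2] unfolding \<rho>_def by auto
  have "\<rho>\<^sup>2 * \<rho> \<le> \<rho>\<^sup>2 * 1" using \<rho>0 \<rho>1 by (intro mult_left_mono) auto
  then have "\<rho> ^ 3 \<le> \<rho>\<^sup>2" by (simp add: power2_eq_square power3_eq_cube)
  moreover have "\<rho> ^ 4 \<le> \<rho> ^ 3" using \<rho>0 \<rho>1 by (simp add: power_decreasing)
  then have "(M1 - 1 / M1) * (\<rho> ^ 4 / (1 - \<rho>)) \<le> (M1 - 1 / M1) * (\<rho> ^ 3 / (1 - \<rho>))"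
    using \<rho>1 diff_inverse_nonneg[OF M1] by (intro mult_left_mono divide_right_mono) auto
  moreover have "\<rho>\<^sup>2 * (\<rho> + (M1 - 1 / M1) * \<rho>\<^sup>2 / (1 - \<rho>)) = \<rho> ^ 3 + (M1 - 1 / M1) * (\<rho> ^ 4 / (1 - \<rho>))"
    by (simp add: algebra_simps power2_eq_square power3_eq_cube power4_eq_xxxx)
  ultimately show ?thesis
    unfolding sigma3_def Let_def \<rho>_def[symmetric] by simp
qed

lemma biharmonic_norm_diff_ge:
  fixes G H :: "complex \<Rightarrow> complex"
  assumes z1: "norm z1 \<le> r" and z2: "norm z2 \<le> r"
    and H: "norm ((H z2 - z2) - (H z1 - z1)) \<le> LH * norm (z2 - z1)"
    and G: "norm (G z2 - G z1) \<le> LG * norm (z2 - z1)"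
    and G1: "norm (G z1) \<le> GM"
  shows "(1 - LH - r\<^sup>2 * LG - 2 * r * GM) * norm (z2 - z1)
    \<le> norm ((of_real ((norm z2)\<^sup>2) * G z2 + H z2) - (of_real ((norm z1)\<^sup>2) * G z1 + H z1))"
    (is "_ \<le> norm ?D")
proof -
  define X where "X = (H z2 - z2) - (H z1 - z1)"
  define Y where "Y = of_real ((norm z2)\<^sup>2) * (G z2 - G z1)"
  define Z where "Z = of_real ((norm z2)\<^sup>2 - (norm z1)\<^sup>2) * G z1"
  have "z2 - z1 = ?D - (X + Y + Z)"
    by (simp add: X_def Y_def Z_def algebra_simps)
  then have "norm (z2 - z1) \<le> norm ?D + norm (X + Y + Z)"
    by (metis norm_triangle_ineq4)
  then have "norm (z2 - z1) \<le> norm ?D + norm X + norm Y + norm Z"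
    using norm_triangle_ineq[of "X + Y" Z] norm_triangle_ineq[of X Y] by linarith
  moreover have "norm Y \<le> r\<^sup>2 * (LG * norm (z2 - z1))"
    unfolding Y_def norm_mult norm_of_real using G z2 by (auto intro!: mult_mono power_mono)
  moreover have "norm Z \<le> 2 * r * norm (z2 - z1) * GM"
  proof -
    have "(norm z2)\<^sup>2 - (norm z1)\<^sup>2 = (norm z2 - norm z1) * (norm z2 + norm z1)"
      by (simp add: power2_eq_square algebra_simps)
    then have "\<bar>(norm z2)\<^sup>2 - (norm z1)\<^sup>2\<bar> = \<bar>norm z2 - norm z1\<bar> * (norm z2 + norm z1)"
      by (simp add: abs_mult)
    also have "\<dots> \<le> norm (z2 - z1) * (2 * r)"
      using norm_triangle_ineq3[of z2 z1] z1 z2 by (intro mult_mono) auto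
    finally have "\<bar>(norm z2)\<^sup>2 - (norm z1)\<^sup>2\<bar> \<le> 2 * r * norm (z2 - z1)"
      by (simp add: mult.commute)
    then show ?thesis
      unfolding Z_def norm_mult norm_of_real using G1 z1 norm_ge_zero[of z1]
      by (intro mult_mono) auto
  qed
  ultimately show ?thesis
    using H by (simp add: X_def algebra_simps)
qed

lemma inj_on_ball_rho3:
  assumes "normalized_bounded_holomorphic G M1" and "normalized_bounded_holomorphic H M2"
  shows "inj_on (\<lambda>z. of_real ((norm z)\<^sup>2) * G z + H z) (ball 0 (rho3 M1 M2))"
proof (rule inj_onI)
  interpret G: normalized_bounded_holomorphic G M1 by fact
  interpret H: normalized_bounded_holomorphic H M2 by fact
  note M1 = G.one_le_M and M2 = H.one_le_M
  fix z1 z2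
  assume z1: "z1 \<in> ball 0 (rho3 M1 M2)" and z2: "z2 \<in> ball 0 (rho3 M1 M2)"
    and eq: "of_real ((norm z1)\<^sup>2) * G z1 + H z1 = of_real ((norm z2)\<^sup>2) * G z2 + H z2"
  define r where "r = max (norm z1) (norm z2)"
  have n1: "norm z1 \<le> r" and n2: "norm z2 \<le> r" and r0: "0 \<le> r" and r_lt: "r < rho3 M1 M2"
    using z1 z2 by (auto simp: r_def le_max_iff_disj)
  have rh: "r \<le> 1 / 2" and r1: "r < 1"
    using r_lt rho3_root[OF M1 M2] by auto
  have pos: "0 < rho3_eq M1 M2 r"
    by (rule rho3_eq_pos_below_rho3[OF M1 M2 r0 r_lt])
  have M2r: "M2 * r \<le> 1"
    by (rule mult_le_1_of_rho3_eq_pos[OF M1 M2 r0 rh pos])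
  have "(1 - ((M2 - 1 / M2) * r / (1 - r) + r * (M2 - 1 / M2) / (1 - r)\<^sup>2)
      - r\<^sup>2 * (1 + (M1 - 1 / M1) * r / (1 - r) + r * M1 / (1 - r\<^sup>2))
      - 2 * r * (r + (M1 - 1 / M1) * r\<^sup>2 / (1 - r))) * norm (z2 - z1) \<le> 0"
    using biharmonic_norm_diff_ge[OF n1 n2 H.norm_diff_sub_id_le_on_cball[OF r1 M2r n1 n2]
        G.norm_diff_le_on_cball[OF r1 n1 n2] G.norm_le[OF n1 r1]] eq
    by simp
  with injectivity_margin_pos[OF M1 M2 r0 rh pos] show "z1 = z2"
    by (simp add: mult_le_0_iff)
qed

lemma ball_subset_image_if_sphere_bound:
  fixes F :: "'a::euclidean_space \<Rightarrow> 'a"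
  assumes cont: "continuous_on (cball 0 \<rho>) F" and inj: "inj_on F (ball 0 \<rho>)"
    and \<rho>: "0 < \<rho>" and F0: "F 0 = 0"
    and bound: "\<And>z. norm z = \<rho> \<Longrightarrow> \<sigma> \<le> norm (F z)"
  shows "ball 0 \<sigma> \<subseteq> F ` ball 0 \<rho>"
proof (rule ccontr)
  assume "\<not> ball 0 \<sigma> \<subseteq> F ` ball 0 \<rho>"
  then obtain x where x: "x \<in> ball 0 \<sigma>" "x \<notin> F ` ball 0 \<rho>" by blast
  have "0 \<in> ball 0 \<sigma> \<inter> F ` ball 0 \<rho>"
  proof -
    have "0 < \<sigma>" using x(1) by (metis mem_ball_0 norm_ge_zero order_le_less_trans)
    then show ?thesis using \<rho> F0 by (auto intro: rev_image_eqI[of 0])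
  qed
  then obtain p where p: "p \<in> ball 0 \<sigma>" "p \<in> frontier (F ` ball 0 \<rho>)"
    using connected_Int_frontier[OF connected_ball, of 0 \<sigma> "F ` ball 0 \<rho>"] x by blast
  have "open (F ` ball 0 \<rho>)"
    by (rule invariance_of_domain[OF continuous_on_subset[OF cont] open_ball inj]) auto
  then have "p \<notin> F ` ball 0 \<rho>"
    using p(2) by (simp add: frontier_def interior_open)
  moreover have "closure (F ` ball 0 \<rho>) \<subseteq> F ` cball 0 \<rho>"
    using compact_continuous_image[OF cont compact_cball]
    by (intro closure_minimal) (auto simp: compact_imp_closed)
  then have "p \<in> F ` cball 0 \<rho>"
    using p(2) by (auto simp: frontier_def)
  ultimately obtain z where "norm z = \<rho>" "p = F z"
    by force
  then show False
    using bound p(1) by fastforce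
qed

lemma norm_biharmonic_ge_sigma3:
  assumes "normalized_bounded_holomorphic G M1" and "normalized_bounded_holomorphic H M2"
    and z: "norm z = rho3 M1 M2"
  shows "sigma3 M1 M2 \<le> norm (of_real ((norm z)\<^sup>2) * G z + H z)"
proof -
  interpret G: normalized_bounded_holomorphic G M1 by fact
  interpret H: normalized_bounded_holomorphic H M2 by fact
  define \<rho> where "\<rho> = rho3 M1 M2"
  have \<rho>1: "\<rho> < 1" and z\<rho>: "norm z \<le> \<rho>"
    using rho3_root[OF G.one_le_M H.one_le_M] z by (auto simp: \<rho>_def)
  have "norm z \<le> norm (H z) + norm (H z - z)"
    using norm_triangle_ineq4[of "H z" "H z - z"] by simp
  then have "\<rho> - (M2 - 1 / M2) * \<rho>\<^sup>2 / (1 - \<rho>) \<le> norm (H z)"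
    using H.norm_sub_id_le[OF z\<rho> \<rho>1] z by (simp add: \<rho>_def)
  moreover have "norm (of_real ((norm z)\<^sup>2) * G z) \<le> \<rho>\<^sup>2 * (\<rho> + (M1 - 1 / M1) * \<rho>\<^sup>2 / (1 - \<rho>))"
    unfolding norm_mult norm_of_real using G.norm_le[OF z\<rho> \<rho>1] z by (simp add: \<rho>_def mult_left_mono)
  moreover have "norm (H z)
      \<le> norm (of_real ((norm z)\<^sup>2) * G z + H z) + norm (of_real ((norm z)\<^sup>2) * G z)"
    using norm_triangle_ineq4[of "of_real ((norm z)\<^sup>2) * G z + H z" "of_real ((norm z)\<^sup>2) * G z"]
    by simp
  ultimately show ?thesis
    using sigma3_le[OF G.one_le_M H.one_le_M] unfolding \<rho>_def by linarith
qed

theorem corollary2p3: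
  fixes G H :: "complex \<Rightarrow> complex" and M1 M2 :: real
  assumes "M1 > 0" and "M2 > 0"
    and "G holomorphic_on ball 0 1" and "H holomorphic_on ball 0 1"
    and "G 0 = 0" and "H 0 = 0"
    and "deriv G 0 = 1" and "deriv H 0 = 1"
    and "\<And>z. z \<in> ball 0 1 \<Longrightarrow> cmod (G z) \<le> M1"
    and "\<And>z. z \<in> ball 0 1 \<Longrightarrow> cmod (H z) \<le> M2"
  shows "inj_on (\<lambda>z. complex_of_real ((cmod z)\<^sup>2) * G z + H z) (ball 0 (rho3 M1 M2))
     \<and> ball 0 (sigma3 M1 M2) \<subseteq> (\<lambda>z. complex_of_real ((cmod z)\<^sup>2) * G z + H z) ` ball 0 (rho3 M1 M2)"
proof -
  have G: "normalized_bounded_holomorphic G M1" and H: "normalized_bounded_holomorphic H M2"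
    using assms by (simp_all add: normalized_bounded_holomorphic_def)
  interpret G: normalized_bounded_holomorphic G M1 by (fact G)
  interpret H: normalized_bounded_holomorphic H M2 by (fact H)
  have \<rho>: "0 < rho3 M1 M2" "rho3 M1 M2 < 1"
    using rho3_root[OF G.one_le_M H.one_le_M] by auto
  have inj: "inj_on (\<lambda>z. of_real ((norm z)\<^sup>2) * G z + H z) (ball 0 (rho3 M1 M2))"
    by (rule inj_on_ball_rho3[OF G H])
  moreover have "ball 0 (sigma3 M1 M2) \<subseteq> (\<lambda>z. of_real ((norm z)\<^sup>2) * G z + H z) ` ball 0 (rho3 M1 M2)"
  proof (rule ball_subset_image_if_sphere_bound[OF _ inj \<rho>(1)])
    show "continuous_on (cball 0 (rho3 M1 M2)) (\<lambda>z. of_real ((norm z)\<^sup>2) * G z + H z)"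
      using G.continuous_on_cball[OF \<rho>(2)] H.continuous_on_cball[OF \<rho>(2)]
      by (intro continuous_intros)
  qed (use norm_biharmonic_ge_sigma3[OF G H] H.at_0 in auto)
  ultimately show ?thesis by blast
qed

end
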